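(* Let $X$ be a non-empty set and let $R$ be a binary relation on $X$. The following are equivalent: (a) There exists a non-empty $w$-stable set of $(X,R)$. (b) There exists a compact topology $\tau$ on $X$ with respect to which $R$ is generalized upper tc-semicontinuous.
   Context: For a binary relation $R$ on $X$, write $xRy$ for $(x,y)\in R$. The transitive closure $\overline{R}$ of $R$ is defined by: $x\overline{R}y$ iff there exist $K\in\mathbb{N}$, $K\ge 1$, and $x_0,\dots,x_K\in X$ with $x_0=x$, $x_K=y$, and $x_{k-1}Rx_k$ for all $k\in\{1,\dots,K\}$. The asymmetric part of a relation $Q$ is $P(Q)$, defined by $xP(Q)y$ iff $xQy$ and not $yQx$. A set $F\subseteq X$ is a $w$-stable set of $(X,R)$ if (i) (internal stability) for all distinct $x,y\in F$, $(x,y)\notin\overline{R}$; and (ii) (external stability) for all $x\in F$ and $y\in X\setminus F$, if $y\overline{R}x$ then $x\overline{R}y$. The relation $R$ is generalized upper tc-semicontinuous with respect to a topology $\tau$ on $X$ if for every $x\in X$ the set $\{y\in X : xP(\overline{R})y\}$ is open in $\tau$. A topology is compact if every open cover of $X$ has a finite subcover. *)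

theory Defs
  imports "HOL-Analysis.Analysis"
begin

definition asym_part :: "('a \<times> 'a) set \<Rightarrow> ('a \<times> 'a) set" where
  "asym_part Q = {(x, y). (x, y) \<in> Q \<and> (y, x) \<notin> Q}"

definition w_stable :: "'a set \<Rightarrow> ('a \<times> 'a) set \<Rightarrow> 'a set \<Rightarrow> bool" where
  "w_stable X R F \<longleftrightarrow> F \<subseteq> X
     \<and> (\<forall>x\<in>F. \<forall>y\<in>F. x \<noteq> y \<longrightarrow> (x, y) \<notin> R\<^sup>+)
     \<and> (\<forall>x\<in>F. \<forall>y\<in>X - F. (y, x) \<in> R\<^sup>+ \<longrightarrow> (x, y) \<in> R\<^sup>+)"

definition gen_upper_tc_semicont :: "'a set \<Rightarrow> ('a \<times> 'a) set \<Rightarrow> 'a topology \<Rightarrow> bool" where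
  "gen_upper_tc_semicont X R T \<longleftrightarrow>
     (\<forall>x\<in>X. openin T {y \<in> X. (x, y) \<in> asym_part (R\<^sup>+)})"

end

theory Submission
  imports Defs
begin

text \<open>Write \<open>P\<close> for the asymmetric part of the transitive closure of \<open>R\<close>; it is a strict
partial order. A non-empty w-stable set exists iff some point of \<open>X\<close> is not \<open>P\<close>-dominated:
every point of a w-stable set is undominated, and an undominated point forms a w-stable
singleton. If \<open>x\<^sub>0\<close> is undominated, the excluded point topology at \<open>x\<^sub>0\<close> is compact (only \<open>X\<close>
contains \<open>x\<^sub>0\<close>) and every \<open>P\<close>-upper section avoids \<open>x\<^sub>0\<close>, hence is open. Conversely, if the
upper sections are open and every point is dominated, they cover the compact space \<open>X\<close>; a
finite subcover indexed by a finite \<open>Y \<subseteq> X\<close> means every point of \<open>Y\<close> is dominated within \<open>Y\<close>,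
contradicting the existence of \<open>P\<close>-minimal elements in finite sets.\<close>

lemma asym_part_iff: "(x, y) \<in> asym_part Q \<longleftrightarrow> (x, y) \<in> Q \<and> (y, x) \<notin> Q"
  unfolding asym_part_def by simp

lemma trans_asym_part: "trans Q \<Longrightarrow> trans (asym_part Q)"
  unfolding trans_def asym_part_iff by blast

lemma irrefl_asym_part: "irrefl (asym_part Q)"
  unfolding irrefl_def asym_part_iff by blast

lemma w_stable_undominated:
  assumes "w_stable X R F" and "x \<in> F" and "y \<in> X"
  shows "(y, x) \<notin> asym_part (R\<^sup>+)"
  using assms unfolding w_stable_def asym_part_iff by (cases "y \<in> F") auto

lemma w_stable_singleton_iff:
  "w_stable X R {x} \<longleftrightarrow> x \<in> X \<and> (\<forall>y\<in>X. (y, x) \<notin> asym_part (R\<^sup>+))"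
  unfolding w_stable_def asym_part_iff by auto

lemma ex_nonempty_w_stable_iff:
  "(\<exists>F. F \<noteq> {} \<and> w_stable X R F) \<longleftrightarrow> (\<exists>x\<in>X. \<forall>y\<in>X. (y, x) \<notin> asym_part (R\<^sup>+))"
proof
  assume "\<exists>F. F \<noteq> {} \<and> w_stable X R F"
  then obtain F x where F: "w_stable X R F" and "x \<in> F"
    by blast
  moreover from this have "x \<in> X"
    unfolding w_stable_def by (meson subsetD)
  ultimately show "\<exists>x\<in>X. \<forall>y\<in>X. (y, x) \<notin> asym_part (R\<^sup>+)"
    using w_stable_undominated[OF F] by blast
next
  assume "\<exists>x\<in>X. \<forall>y\<in>X. (y, x) \<notin> asym_part (R\<^sup>+)"
  then obtain x where "w_stable X R {x}"
    by (auto simp only: w_stable_singleton_iff)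
  then show "\<exists>F. F \<noteq> {} \<and> w_stable X R F"
    by blast
qed

lemma finite_ex_minimal_strict_order:
  assumes "trans P" "irrefl P" "finite Y" "Y \<noteq> {}"
  obtains z where "z \<in> Y" "\<forall>y\<in>Y. (y, z) \<notin> P"
proof -
  have "acyclic P"
    using assms(1,2) by (simp add: acyclic_irrefl trancl_id)
  then have "acyclic (P \<inter> Y \<times> Y)"
    by (rule acyclic_subset) (rule Int_lower1)
  moreover have "finite (P \<inter> Y \<times> Y)"
    using assms(3) by (simp add: finite_Int)
  ultimately have "wf (P \<inter> Y \<times> Y)"
    by (rule finite_acyclic_wf[rotated])
  then obtain z where "z \<in> Y" "\<forall>y. (y, z) \<in> P \<inter> Y \<times> Y \<longrightarrow> y \<notin> Y"
    using assms(4) wf_eq_minimal by (metis ex_in_conv)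
  then show thesis
    using that by blast
qed

lemma compact_space_ex_undominated:
  assumes "compact_space T" "topspace T \<noteq> {}" "trans P" "irrefl P"
    and upper_open: "\<And>x. x \<in> topspace T \<Longrightarrow> openin T {y \<in> topspace T. (x, y) \<in> P}"
  shows "\<exists>x\<in>topspace T. \<forall>y\<in>topspace T. (y, x) \<notin> P"
proof (rule ccontr)
  define X where "X = topspace T"
  define S where "S x = {y \<in> X. (x, y) \<in> P}" for x
  assume "\<not> ?thesis"
  then have "X \<subseteq> \<Union>(S ` X)"
    unfolding S_def X_def by blast
  moreover have "\<And>U. U \<in> S ` X \<Longrightarrow> openin T U"
    using upper_open unfolding S_def X_def by blast
  ultimately obtain G where G: "finite G" "G \<subseteq> S ` X" "X \<subseteq> \<Union>G"
    using compactinD assms(1) unfolding compact_space_def X_def by metis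
  then obtain Y where Y: "Y \<subseteq> X" "finite Y" "G = S ` Y"
    by (meson finite_subset_image)
  with G assms(2) have "Y \<noteq> {}"
    unfolding X_def by auto
  then obtain z where z: "z \<in> Y" "\<forall>y\<in>Y. (y, z) \<notin> P"
    using finite_ex_minimal_strict_order[OF assms(3,4) \<open>finite Y\<close>] by blast
  have "z \<in> \<Union>G"
    using G(3) Y(1) z(1) by blast
  then obtain y where "y \<in> Y" "z \<in> S y"
    unfolding Y(3) by blast
  with z(2) show False
    unfolding S_def by blast
qed

definition excluded_point_topology :: "'a set \<Rightarrow> 'a \<Rightarrow> 'a topology" where
  "excluded_point_topology X p = topology (\<lambda>U. U = X \<or> (U \<subseteq> X \<and> p \<notin> U))"

lemma openin_excluded_point_topology:
  assumes "p \<in> X"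
  shows "openin (excluded_point_topology X p) U \<longleftrightarrow> U = X \<or> (U \<subseteq> X \<and> p \<notin> U)"
proof -
  have "istopology (\<lambda>U. U = X \<or> (U \<subseteq> X \<and> p \<notin> U))"
    unfolding istopology_def using assms by auto
  then show ?thesis
    unfolding excluded_point_topology_def by simp
qed

lemma topspace_excluded_point_topology:
  assumes "p \<in> X"
  shows "topspace (excluded_point_topology X p) = X"
  unfolding topspace_def openin_excluded_point_topology[OF assms] by auto

lemma compact_space_excluded_point_topology:
  assumes "p \<in> X"
  shows "compact_space (excluded_point_topology X p)"
  unfolding compact_space_def compactin_def topspace_excluded_point_topology[OF assms]
proof (intro conjI allI impI)
  fix \<U> assume \<U>: "(\<forall>U\<in>\<U>. openin (excluded_point_topology X p) U) \<and> X \<subseteq> \<Union>\<U>"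
  then obtain U where "U \<in> \<U>" "p \<in> U"
    using assms by blast
  with \<U> have "U = X"
    using openin_excluded_point_topology[OF assms] by blast
  with \<open>U \<in> \<U>\<close> show "\<exists>\<F>. finite \<F> \<and> \<F> \<subseteq> \<U> \<and> X \<subseteq> \<Union>\<F>"
    by (intro exI[of _ "{U}"]) auto
qed simp

lemma gen_upper_tc_semicont_excluded_point_topology:
  assumes "p \<in> X" and "\<forall>y\<in>X. (y, p) \<notin> asym_part (R\<^sup>+)"
  shows "gen_upper_tc_semicont X R (excluded_point_topology X p)"
  using assms unfolding gen_upper_tc_semicont_def openin_excluded_point_topology[OF assms(1)]
  by blast

theorem theorem1:
  fixes X :: "'a set" and R :: "('a \<times> 'a) set"
  assumes "X \<noteq> {}" and "R \<subseteq> X \<times> X"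
  shows "(\<exists>F. F \<noteq> {} \<and> w_stable X R F) \<longleftrightarrow>
         (\<exists>T. topspace T = X \<and> compact_space T \<and> gen_upper_tc_semicont X R T)"
  unfolding ex_nonempty_w_stable_iff
proof
  assume "\<exists>p\<in>X. \<forall>y\<in>X. (y, p) \<notin> asym_part (R\<^sup>+)"
  then obtain p where p: "p \<in> X" "\<forall>y\<in>X. (y, p) \<notin> asym_part (R\<^sup>+)"
    by blast
  show "\<exists>T. topspace T = X \<and> compact_space T \<and> gen_upper_tc_semicont X R T"
    using topspace_excluded_point_topology[OF p(1)] compact_space_excluded_point_topology[OF p(1)]
      gen_upper_tc_semicont_excluded_point_topology[OF p] by blast
next
  assume "\<exists>T. topspace T = X \<and> compact_space T \<and> gen_upper_tc_semicont X R T"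
  then obtain T where T: "topspace T = X" "compact_space T" "gen_upper_tc_semicont X R T"
    by blast
  have "\<exists>p\<in>topspace T. \<forall>y\<in>topspace T. (y, p) \<notin> asym_part (R\<^sup>+)"
  proof (rule compact_space_ex_undominated)
    show "trans (asym_part (R\<^sup>+))"
      by (simp add: trans_asym_part)
  qed (use T assms(1) irrefl_asym_part in \<open>auto simp: gen_upper_tc_semicont_def\<close>)
  then show "\<exists>p\<in>X. \<forall>y\<in>X. (y, p) \<notin> asym_part (R\<^sup>+)"
    using T(1) by simp
qed

end
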